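(* Let $\mathbf{C}_{\mathrm{ATM}}$ be the class of all absolute team independence structures $\mathcal{I}_X$ (for all teams $X$, with arbitrary domain $I$ and arbitrary value set $M$). Then for every set $\Sigma$ of absolute independence atoms over $V$ and every absolute independence atom $\phi$ over $V$, $$\Sigma\vdash_{\mathcal{AI}}\phi \iff \Sigma\models_{\mathbf{C}_{\mathrm{ATM}}}\phi .$$
   Context: Fix a countably infinite set $V$ of variables. An absolute independence atom over $V$ is an expression $\bot(\vec x)$ where $\vec x$ is a finite (possibly empty) sequence of pairwise distinct variables from $V$. Derivability $\Sigma\vdash_{\mathcal{AI}}\phi$ means that $\phi$ belongs to the smallest set of absolute independence atoms containing $\Sigma$ and closed under the rules: (a) $\bot(\emptyset)$ (empty sequence) is derivable; (b) from $\bot(\vec x\vec y)$ infer $\bot(\vec x)$ (here $\vec x\vec y$ is concatenation); (c) from $\bot(\vec x)$ infer $\bot(\vec y)$ for any permutation $\vec y$ of $\vec x$. An absolute independence structure is a pair $(I,\mathcal{A})$ with $I$ a nonempty set and $\mathcal{A}$ a set of finite subsets of $I$ closed under subsets. A team with domain $I$ and values in $M$ is a set $X$ of functions $s:I\to M$. For a finite $\mathbf{x}\subseteq I$ and $x_i\in\mathbf{x}$ let $\mathbf{x}-_X x_i=\{x_j\in\mathbf{x} : \exists s\in X\ (s(x_i)\neq s(x_j))\}$; for $s,s'\in X$ and a set $\mathbf{z}\subseteq I$, $s(\mathbf{z})=s'(\mathbf{z})$ means $s(z)=s'(z)$ for all $z\in\mathbf{z}$. Let $\mathcal{A}_X$ be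 the set of finite $\mathbf{x}\subseteq I$ such that for every $x_i\in\mathbf{x}$: (1) for all $s,s'\in X$ there is $s''\in X$ with $s''(x_i)=s(x_i)$ and $s''(\mathbf{x}-_X x_i)=s'(\mathbf{x}-_X x_i)$, and (2) there are $s,s'\in X$ with $s(x_i)\neq s'(x_i)$. The absolute team independence structure of $X$ is $\mathcal{I}_X=(I,\mathcal{A}_X)$. Semantics: an assignment into $(I,\mathcal{A})$ is a map $s:V\to I$; for a sequence $\vec x=(x_0,\dots,x_{n-1})$ put $s(\vec x)=\{s(x_0),\dots,s(x_{n-1})\}$; $s$ satisfies $\bot(\vec x)$ in $(I,\mathcal{A})$ iff $s(\vec x)\in\mathcal{A}$. For a class $\mathbf{C}$ of such structures, $\Sigma\models_{\mathbf{C}}\phi$ means every assignment into every structure in $\mathbf{C}$ satisfying all atoms of $\Sigma$ also satisfies $\phi$. *)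

theory Defs
  imports Main "HOL-Library.Multiset"
begin

text \<open>Variables V: the countably infinite type nat.
  An absolute independence atom is represented by the list of its variables
  (required to be distinct).\<close>

inductive AI_deriv :: "nat list set \<Rightarrow> nat list \<Rightarrow> bool" for \<Sigma> where
  ax: "\<phi> \<in> \<Sigma> \<Longrightarrow> AI_deriv \<Sigma> \<phi>"
| empty: "AI_deriv \<Sigma> []"
| proj: "AI_deriv \<Sigma> (xs @ ys) \<Longrightarrow> AI_deriv \<Sigma> xs"
| perm: "AI_deriv \<Sigma> xs \<Longrightarrow> mset ys = mset xs \<Longrightarrow> AI_deriv \<Sigma> ys"

text \<open>Teams with domain I = UNIV :: 'i and values in 'm.\<close>

definition team_minus :: "('i \<Rightarrow> 'm) set \<Rightarrow> 'i set \<Rightarrow> 'i \<Rightarrow> 'i set" where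
  "team_minus X x xi = {xj \<in> x. \<exists>s\<in>X. s xi \<noteq> s xj}"

definition team_A :: "('i \<Rightarrow> 'm) set \<Rightarrow> 'i set set" where
  "team_A X = {x. finite x \<and>
     (\<forall>xi\<in>x.
        (\<forall>s\<in>X. \<forall>s'\<in>X. \<exists>s''\<in>X. s'' xi = s xi \<and> (\<forall>z\<in>team_minus X x xi. s'' z = s' z)) \<and>
        (\<exists>s\<in>X. \<exists>s'\<in>X. s xi \<noteq> s' xi))}"

definition sat_atom :: "'i set set \<Rightarrow> (nat \<Rightarrow> 'i) \<Rightarrow> nat list \<Rightarrow> bool" where
  "sat_atom A s \<phi> \<longleftrightarrow> s ` set \<phi> \<in> A"

text \<open>Semantic consequence over all absolute team independence structures whose
  domain is the type 'i and whose value set is the type 'm.\<close>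

definition atm_conseq :: "'i itself \<Rightarrow> 'm itself \<Rightarrow> nat list set \<Rightarrow> nat list \<Rightarrow> bool" where
  "atm_conseq _ _ \<Sigma> \<phi> \<longleftrightarrow>
     (\<forall>(X :: ('i \<Rightarrow> 'm) set) (s :: nat \<Rightarrow> 'i).
        (\<forall>\<psi>\<in>\<Sigma>. sat_atom (team_A X) s \<psi>) \<longrightarrow> sat_atom (team_A X) s \<phi>)"

end

theory Submission
  imports Defs
begin

text \<open>Soundness holds because every family team_A X contains the empty set and is closed under
  subsets, while the semantics of an atom only depends on its set of variables.
  For completeness, suppose \<phi> is not derivable and let S = set \<phi>, which is
  nonempty and not contained in the variable set of any atom of \<Sigma>. The team of all
  {0,1,2}-valued functions whose values on S sum to 0 mod 3 makes every
  finite set not containing S independent: one coordinate of S outside the set can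
  absorb any change. But S itself is dependent, since the values on S - {a}
  determine the value at a (which is constant when S = {a}). Under the identity assignment this team satisfies
  \<Sigma> but not \<phi>.\<close>

lemma empty_in_team_A: "{} \<in> team_A X"
  by (simp add: team_A_def)

lemma team_minus_mono: "y \<subseteq> x \<Longrightarrow> team_minus X y xi \<subseteq> team_minus X x xi"
  unfolding team_minus_def by blast

lemma team_minus_subset: "team_minus X x xi \<subseteq> x - {xi}"
  unfolding team_minus_def by blast

lemma team_AI:
  assumes "finite x"
    and "\<And>xi s s'. \<lbrakk>xi \<in> x; s \<in> X; s' \<in> X\<rbrakk> \<Longrightarrow>
           \<exists>s''\<in>X. s'' xi = s xi \<and> (\<forall>z\<in>team_minus X x xi. s'' z = s' z)"
    and "\<And>xi. xi \<in> x \<Longrightarrow> \<exists>s\<in>X. \<exists>s'\<in>X. s xi \<noteq> s' xi"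
  shows "x \<in> team_A X"
  using assms unfolding team_A_def by blast

lemma team_A_exchangeE:
  assumes "x \<in> team_A X" and "xi \<in> x" and "s \<in> X" and "s' \<in> X"
  obtains s'' where "s'' \<in> X" and "s'' xi = s xi" and "\<forall>z\<in>team_minus X x xi. s'' z = s' z"
  using assms unfolding team_A_def by blast

lemma team_A_nonconstantE:
  assumes "x \<in> team_A X" and "xi \<in> x"
  obtains s s' where "s \<in> X" and "s' \<in> X" and "s xi \<noteq> s' xi"
  using assms unfolding team_A_def by blast

lemma team_A_downward_closed:
  assumes "x \<in> team_A X" and "y \<subseteq> x"
  shows "y \<in> team_A X"
proof (rule team_AI)
  show "finite y"
    using assms finite_subset unfolding team_A_def by blast
next
  fix xi s s' assume "xi \<in> y" and "s \<in> X" and "s' \<in> X"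
  with assms(2) have "xi \<in> x" by blast
  obtain s'' where "s'' \<in> X" "s'' xi = s xi" "\<forall>z\<in>team_minus X x xi. s'' z = s' z"
    by (rule team_A_exchangeE[OF assms(1) \<open>xi \<in> x\<close> \<open>s \<in> X\<close> \<open>s' \<in> X\<close>])
  with team_minus_mono[OF assms(2)]
  show "\<exists>s''\<in>X. s'' xi = s xi \<and> (\<forall>z\<in>team_minus X y xi. s'' z = s' z)"
    by blast
next
  fix xi assume "xi \<in> y"
  with assms(2) have "xi \<in> x" by blast
  with assms(1) show "\<exists>s\<in>X. \<exists>s'\<in>X. s xi \<noteq> s' xi"
    by (blast elim: team_A_nonconstantE)
qed

theorem AI_deriv_sound:
  assumes "AI_deriv \<Sigma> \<phi>"
  shows "atm_conseq TYPE('i) TYPE('m) \<Sigma> \<phi>"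
  unfolding atm_conseq_def
proof (intro allI impI)
  fix X :: "('i \<Rightarrow> 'm) set" and s :: "nat \<Rightarrow> 'i"
  assume \<Sigma>_sat: "\<forall>\<psi>\<in>\<Sigma>. sat_atom (team_A X) s \<psi>"
  from assms show "sat_atom (team_A X) s \<phi>"
  proof (induction rule: AI_deriv.induct)
    case (ax \<phi>)
    then show ?case using \<Sigma>_sat by blast
  next
    case empty
    then show ?case by (simp add: sat_atom_def empty_in_team_A)
  next
    case (proj xs ys)
    have "s ` set xs \<subseteq> s ` set (xs @ ys)" by auto
    with proj.IH show ?case
      unfolding sat_atom_def by (rule team_A_downward_closed)
  next
    case (perm xs ys)
    then have "set ys = set xs" by (metis set_mset_mset)
    with perm.IH show ?case by (simp add: sat_atom_def)
  qed
qed

lemma AI_deriv_subset: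
  assumes "AI_deriv \<Sigma> \<psi>" and "distinct \<psi>" and "distinct \<phi>" and "set \<phi> \<subseteq> set \<psi>"
  shows "AI_deriv \<Sigma> \<phi>"
proof -
  define rest where "rest = filter (\<lambda>x. x \<notin> set \<phi>) \<psi>"
  have "mset (\<phi> @ rest) = mset \<psi>"
    using assms(2-4) by (subst set_eq_iff_mset_eq_distinct[symmetric]) (auto simp: rest_def)
  with assms(1) have "AI_deriv \<Sigma> (\<phi> @ rest)" by (rule AI_deriv.perm)
  then show ?thesis by (rule AI_deriv.proj)
qed

definition mod3_team :: "nat set \<Rightarrow> (nat \<Rightarrow> nat) set" where
  "mod3_team S = {f. (\<forall>i. f i < 3) \<and> (\<Sum>i\<in>S. f i) mod 3 = 0}"

text \<open>Since -T \<equiv> 2 T (mod 3), the new value at a makes the sum over S divisible by 3.\<close>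

definition mod3_balance :: "nat set \<Rightarrow> nat \<Rightarrow> (nat \<Rightarrow> nat) \<Rightarrow> nat \<Rightarrow> nat" where
  "mod3_balance S a h = h(a := 2 * (\<Sum>i\<in>S - {a}. h i) mod 3)"

lemma mod3_balance_in_mod3_team:
  assumes "finite S" and "a \<in> S" and "\<forall>i. h i < 3"
  shows "mod3_balance S a h \<in> mod3_team S"
proof -
  let ?T = "\<Sum>i\<in>S - {a}. h i"
  have "(\<Sum>i\<in>S - {a}. mod3_balance S a h i) = ?T"
    by (rule sum.cong) (auto simp: mod3_balance_def)
  then have "(\<Sum>i\<in>S. mod3_balance S a h i) = 2 * ?T mod 3 + ?T"
    using sum.remove[OF assms(1,2), of "mod3_balance S a h"] by (simp add: mod3_balance_def)
  then have "(\<Sum>i\<in>S. mod3_balance S a h i) mod 3 = (3 * ?T) mod 3"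
    by (simp add: mod_add_left_eq)
  moreover have "\<forall>i. mod3_balance S a h i < 3"
    using assms(3) by (simp add: mod3_balance_def)
  ultimately show ?thesis
    by (simp add: mod3_team_def)
qed

lemma two_point_in_mod3_team:
  assumes "finite S" and "a \<in> S" and "c \<in> S" and "a \<noteq> c"
  shows "(\<lambda>i. (if i = a then 1 else 0) + (if i = c then 2 else 0)) \<in> mod3_team S"
  using assms by (simp add: mod3_team_def sum.distrib)

lemma team_A_mod3_team:
  assumes "finite S" and "finite x" and "\<not> S \<subseteq> x"
  shows "x \<in> team_A (mod3_team S)"
proof -
  obtain a where a: "a \<in> S" "a \<notin> x" using assms(3) by blast
  show ?thesis
  proof (rule team_AI[OF assms(2)])
    fix xi s s' assume "xi \<in> x" and "s \<in> mod3_team S" and "s' \<in> mod3_team S"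
    define s'' where "s'' = mod3_balance S a (s'(xi := s xi))"
    have "s'' \<in> mod3_team S"
      using \<open>s \<in> mod3_team S\<close> \<open>s' \<in> mod3_team S\<close> mod3_balance_in_mod3_team[OF assms(1) a(1)]
      by (simp add: mod3_team_def s''_def)
    moreover have "s'' xi = s xi"
      using \<open>xi \<in> x\<close> a(2) by (auto simp: s''_def mod3_balance_def)
    moreover have "\<forall>z\<in>team_minus (mod3_team S) x xi. s'' z = s' z"
      using a(2) team_minus_subset[of "mod3_team S" x xi] by (auto simp: s''_def mod3_balance_def)
    ultimately show "\<exists>s''\<in>mod3_team S.
        s'' xi = s xi \<and> (\<forall>z\<in>team_minus (mod3_team S) x xi. s'' z = s' z)"
      by blast
  next
    fix xi assume "xi \<in> x"
    then have "xi \<noteq> a" using a(2) by blast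
    have "mod3_balance S a (\<lambda>i. if i = xi then 1 else 0) \<in> mod3_team S"
      and "mod3_balance S a (\<lambda>_. 0) \<in> mod3_team S"
      using mod3_balance_in_mod3_team[OF assms(1) a(1)] by simp_all
    moreover have "mod3_balance S a (\<lambda>i. if i = xi then 1 else 0) xi \<noteq> mod3_balance S a (\<lambda>_. 0) xi"
      using \<open>xi \<noteq> a\<close> by (simp add: mod3_balance_def)
    ultimately show "\<exists>s\<in>mod3_team S. \<exists>s'\<in>mod3_team S. s xi \<noteq> s' xi" by blast
  qed
qed

lemma team_minus_mod3_team:
  assumes "finite S" and "a \<in> S"
  shows "team_minus (mod3_team S) S a = S - {a}"
proof (rule equalityI)
  show "S - {a} \<subseteq> team_minus (mod3_team S) S a"
  proof
    fix c assume c: "c \<in> S - {a}"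
    define t :: "nat \<Rightarrow> nat" where "t i = (if i = a then 1 else 0) + (if i = c then 2 else 0)" for i
    have "t \<in> mod3_team S"
      unfolding t_def using assms c by (intro two_point_in_mod3_team) auto
    moreover have "t a \<noteq> t c" using c by (simp add: t_def)
    ultimately show "c \<in> team_minus (mod3_team S) S a"
      using c unfolding team_minus_def by blast
  qed
qed (rule team_minus_subset)

lemma not_team_A_mod3_team:
  assumes "finite S" and "S \<noteq> {}"
  shows "S \<notin> team_A (mod3_team S)"
proof
  assume S_indep: "S \<in> team_A (mod3_team S)"
  obtain a where a: "a \<in> S" using assms(2) by blast
  show False
  proof (cases "S = {a}")
    case True
    have "f a = 0" if "f \<in> mod3_team S" for f
    proof -
      have "f a < 3" and "f a mod 3 = 0"
        using that True by (simp_all add: mod3_team_def)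
      then show ?thesis by simp
    qed
    with S_indep a show False
      by (metis team_A_nonconstantE)
  next
    case False
    then obtain c where c: "c \<in> S" "c \<noteq> a" using a by blast
    define t :: "nat \<Rightarrow> nat" where "t i = (if i = a then 1 else 0) + (if i = c then 2 else 0)" for i
    have "t \<in> mod3_team S"
      unfolding t_def using two_point_in_mod3_team[OF assms(1) a c(1)] c(2) by simp
    moreover have "(\<lambda>_. 0) \<in> mod3_team S" by (simp add: mod3_team_def)
    ultimately obtain s where s: "s \<in> mod3_team S" "s a = t a"
      and "\<forall>z\<in>team_minus (mod3_team S) S a. s z = 0"
      by (rule team_A_exchangeE[OF S_indep a])
    then have "\<forall>z\<in>S - {a}. s z = 0"
      by (simp add: team_minus_mod3_team[OF assms(1) a])
    have "(\<Sum>i\<in>S. s i) = s a + (\<Sum>i\<in>S - {a}. s i)"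
      using assms(1) a by (rule sum.remove)
    also have "\<dots> = 1" using s(2) c(2) \<open>\<forall>z\<in>S - {a}. s z = 0\<close> by (simp add: t_def)
    finally show False using s(1) by (simp add: mod3_team_def)
  qed
qed

theorem AI_deriv_complete:
  assumes "\<forall>\<psi>\<in>\<Sigma>. distinct \<psi>" and "distinct \<phi>" and "atm_conseq TYPE(nat) TYPE(nat) \<Sigma> \<phi>"
  shows "AI_deriv \<Sigma> \<phi>"
proof (rule ccontr)
  assume not_deriv: "\<not> AI_deriv \<Sigma> \<phi>"
  define S where "S = set \<phi>"
  have "finite S" by (simp add: S_def)
  have "S \<noteq> {}"
    using not_deriv AI_deriv.empty by (auto simp: S_def)
  have "sat_atom (team_A (mod3_team S)) id \<psi>" if "\<psi> \<in> \<Sigma>" for \<psi>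
  proof -
    have "\<not> S \<subseteq> set \<psi>"
    proof
      assume "S \<subseteq> set \<psi>"
      with that assms(1,2) have "AI_deriv \<Sigma> \<phi>"
        by (intro AI_deriv_subset[OF AI_deriv.ax[OF that]]) (auto simp: S_def)
      with not_deriv show False by contradiction
    qed
    with team_A_mod3_team[OF \<open>finite S\<close>] show ?thesis
      by (simp add: sat_atom_def)
  qed
  with assms(3) have "sat_atom (team_A (mod3_team S)) id \<phi>"
    unfolding atm_conseq_def by blast
  with not_team_A_mod3_team[OF \<open>finite S\<close> \<open>S \<noteq> {}\<close>] show False
    by (simp add: sat_atom_def S_def)
qed

theorem mainTheorem1:
  fixes \<Sigma> :: "nat list set" and \<phi> :: "nat list"
  assumes "\<forall>\<psi>\<in>\<Sigma>. distinct \<psi>" and "distinct \<phi>"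
  shows "(AI_deriv \<Sigma> \<phi> \<longleftrightarrow> atm_conseq TYPE(nat) TYPE(nat) \<Sigma> \<phi>)
       \<and> (AI_deriv \<Sigma> \<phi> \<longrightarrow> atm_conseq TYPE('i) TYPE('m) \<Sigma> \<phi>)"
  using AI_deriv_sound[of \<Sigma> \<phi>] AI_deriv_sound[of \<Sigma> \<phi>, where 'i = nat and 'm = nat]
    AI_deriv_complete[OF assms] by blast

end
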